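(* Let $\mathcal{X}$ be a family of subsets of $[d]$ such that at least one $\mathcal{X}$-matroid exists, and suppose the refinement procedure reaches the stationary function $v_{\mathcal{X}}$. If $v_{\mathcal{X}}$ is submodular, then $v_{\mathcal{X}}$ is the rank function of an $\mathcal{X}$-matroid, and this $\mathcal{X}$-matroid is the unique minimal $\mathcal{X}$-matroid with respect to the dependency order.
   Context: An $\mathcal{X}$-matroid is a matroid on $[d]$ in which every member of $\mathcal{X}$ is a circuit. Dependency order: $N_1\le N_2$ iff every dependent set of $N_1$ is dependent in $N_2$. A proper $\mathcal{X}$-sequence is a sequence $\mathcal{S}=(X_1,\dots,X_k)$ ($k\ge0$) of members of $\mathcal{X}$ with $X_i\not\subseteq\bigcup_{j<i}X_j$ for $i\ge2$; for $F\subseteq[d]$, $\mathrm{val}(F,\mathcal{S})=|F\cup\bigcup_{i=1}^kX_i|-k$ and $\mathrm{val}_{\mathcal{X}}(F)=\min_{\mathcal{S}}\mathrm{val}(F,\mathcal{S})$. Refinement procedure: $\mathrm{val}^1_{\mathcal{X}}=\mathrm{val}_{\mathcal{X}}$, and $\mathrm{val}^{n+1}_{\mathcal{X}}$ is obtained from $\mathrm{val}^n_{\mathcal{X}}$ by the first applicable rule: (i) if there are $A,B\subseteq[d]$, $x\in\mathcal{X}$ with $A\cap B\subseteq x$ and $\mathrm{val}^n(A\cup B)>\mathrm{val}^n(A)+\mathrm{val}^n(B)-\min\{|A\cap B|,|x|-1\}$, for one such choice lower $\mathrm{val}^{n+1}(A\cup B)$ to the right-hand side; (ii) else if there are $A\subsetneq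 B$ with $\mathrm{val}^n(A)>\mathrm{val}^n(B)$, for one such choice set $\mathrm{val}^{n+1}(A)=\mathrm{val}^n(B)$; (iii) else if there are $B\subsetneq A$ with $\mathrm{val}^n(A)>\mathrm{val}^n(B)+|A\setminus B|$, for one such choice set $\mathrm{val}^{n+1}(A)=\mathrm{val}^n(B)+|A\setminus B|$; (iv) else $\mathrm{val}^{n+1}=\mathrm{val}^n$; all other values unchanged. The stationary function is $v_{\mathcal{X}}$ (independent of the choices). A function $f:2^{[d]}\to\mathbb{Z}$ is submodular if $f(A\cup B)+f(A\cap B)\le f(A)+f(B)$ for all $A,B$. *)

theory Defs
  imports Main
begin

definition ground :: "nat \<Rightarrow> nat set" where
  "ground d = {1..d}"

definition matroid_indep :: "nat \<Rightarrow> (nat set \<Rightarrow> bool) \<Rightarrow> bool" where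
  "matroid_indep d I \<longleftrightarrow>
     I {} \<and>
     (\<forall>A. I A \<longrightarrow> A \<subseteq> ground d) \<and>
     (\<forall>A B. I B \<and> A \<subseteq> B \<longrightarrow> I A) \<and>
     (\<forall>A B. I A \<and> I B \<and> card A < card B \<longrightarrow> (\<exists>x\<in>B - A. I (insert x A)))"

definition dependent :: "nat \<Rightarrow> (nat set \<Rightarrow> bool) \<Rightarrow> nat set \<Rightarrow> bool" where
  "dependent d I A \<longleftrightarrow> A \<subseteq> ground d \<and> \<not> I A"

definition circuit :: "nat \<Rightarrow> (nat set \<Rightarrow> bool) \<Rightarrow> nat set \<Rightarrow> bool" where
  "circuit d I C \<longleftrightarrow> dependent d I C \<and> (\<forall>B. B \<subset> C \<longrightarrow> I B)"

definition X_matroid :: "nat \<Rightarrow> nat set set \<Rightarrow> (nat set \<Rightarrow> bool) \<Rightarrow> bool" where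
  "X_matroid d X I \<longleftrightarrow> matroid_indep d I \<and> (\<forall>C\<in>X. circuit d I C)"

definition dep_le :: "nat \<Rightarrow> (nat set \<Rightarrow> bool) \<Rightarrow> (nat set \<Rightarrow> bool) \<Rightarrow> bool" where
  "dep_le d I1 I2 \<longleftrightarrow> (\<forall>A. dependent d I1 A \<longrightarrow> dependent d I2 A)"

definition matroid_rank :: "(nat set \<Rightarrow> bool) \<Rightarrow> nat set \<Rightarrow> nat" where
  "matroid_rank I F = Max {card A | A. A \<subseteq> F \<and> I A}"

text \<open>Proper X-sequences (as lists, X_1 first) and the function val_X.\<close>
definition proper_seq :: "nat set set \<Rightarrow> nat set list \<Rightarrow> bool" where
  "proper_seq X xs \<longleftrightarrow> set xs \<subseteq> X \<and>
     (\<forall>i. 1 \<le> i \<and> i < length xs \<longrightarrow> \<not> (xs ! i \<subseteq> \<Union> (set (take i xs))))"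

definition val_seq :: "nat set \<Rightarrow> nat set list \<Rightarrow> int" where
  "val_seq F xs = int (card (F \<union> \<Union> (set xs))) - int (length xs)"

definition valX :: "nat set set \<Rightarrow> nat set \<Rightarrow> int" where
  "valX X F = Min {val_seq F xs | xs. proper_seq X xs}"

text \<open>One step of the refinement procedure (first applicable rule, one admissible choice).\<close>
definition rule_i_cond :: "nat \<Rightarrow> nat set set \<Rightarrow> (nat set \<Rightarrow> int) \<Rightarrow> nat set \<Rightarrow> nat set \<Rightarrow> nat set \<Rightarrow> bool" where
  "rule_i_cond d X f A B x \<longleftrightarrow> A \<subseteq> ground d \<and> B \<subseteq> ground d \<and> x \<in> X \<and> A \<inter> B \<subseteq> x \<and>
     f (A \<union> B) > f A + f B - min (int (card (A \<inter> B))) (int (card x) - 1)"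

definition rule_ii_cond :: "nat \<Rightarrow> (nat set \<Rightarrow> int) \<Rightarrow> nat set \<Rightarrow> nat set \<Rightarrow> bool" where
  "rule_ii_cond d f A B \<longleftrightarrow> A \<subset> B \<and> B \<subseteq> ground d \<and> f A > f B"

definition rule_iii_cond :: "nat \<Rightarrow> (nat set \<Rightarrow> int) \<Rightarrow> nat set \<Rightarrow> nat set \<Rightarrow> bool" where
  "rule_iii_cond d f A B \<longleftrightarrow> B \<subset> A \<and> A \<subseteq> ground d \<and> f A > f B + int (card (A - B))"

definition refine_step :: "nat \<Rightarrow> nat set set \<Rightarrow> (nat set \<Rightarrow> int) \<Rightarrow> (nat set \<Rightarrow> int) \<Rightarrow> bool" where
  "refine_step d X f g \<longleftrightarrow>
     (if \<exists>A B x. rule_i_cond d X f A B x then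
        (\<exists>A B x. rule_i_cond d X f A B x \<and>
           g = f(A \<union> B := f A + f B - min (int (card (A \<inter> B))) (int (card x) - 1)))
      else if \<exists>A B. rule_ii_cond d f A B then
        (\<exists>A B. rule_ii_cond d f A B \<and> g = f(A := f B))
      else if \<exists>A B. rule_iii_cond d f A B then
        (\<exists>A B. rule_iii_cond d f A B \<and> g = f(A := f B + int (card (A - B))))
      else g = f)"

definition refinement_run :: "nat \<Rightarrow> nat set set \<Rightarrow> (nat \<Rightarrow> nat set \<Rightarrow> int) \<Rightarrow> bool" where
  "refinement_run d X vs \<longleftrightarrow> vs 1 = valX X \<and> (\<forall>n\<ge>1. refine_step d X (vs n) (vs (Suc n)))"

definition submodular_on :: "nat \<Rightarrow> (nat set \<Rightarrow> int) \<Rightarrow> bool" where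
  "submodular_on d f \<longleftrightarrow> (\<forall>A B. A \<subseteq> ground d \<and> B \<subseteq> ground d \<longrightarrow>
      f (A \<union> B) + f (A \<inter> B) \<le> f A + f B)"

definition minimal_X_matroid :: "nat \<Rightarrow> nat set set \<Rightarrow> (nat set \<Rightarrow> bool) \<Rightarrow> bool" where
  "minimal_X_matroid d X I \<longleftrightarrow> X_matroid d X I \<and>
     (\<forall>J. X_matroid d X J \<and> dep_le d J I \<longrightarrow> J = I)"

end

theory Submission
  imports Defs
begin

(* Every X-matroid M satisfies r_M \<le> val_X: along a proper X-sequence each new circuit X_i,
   not covered by X_1, ..., X_(i-1), raises the rank by at most |X_i - (X_1 \<union> ... \<union> X_(i-1))| - 1.
   Each refinement rule lowers a value only to a bound that every matroid rank function
   obeys (for rule (i) this is submodularity together with r(A \<inter> B) \<ge> min |A \<inter> B| (|x| - 1)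
   when A \<inter> B \<subseteq> x), so r_M \<le> v_X. At the fixpoint rules (ii) and (iii) no longer apply, so
   v_X is monotone with unit increase; if it is also submodular it is the rank function of
   the matroid whose independent sets are those A with v_X A = |A|. Each x \<in> X is a circuit of
   it since v_X x \<le> val_X x \<le> |x| - 1, and r_M \<le> v_X makes it the least X-matroid in the
   dependency order. *)

lemma finite_ground [simp]: "finite (ground d)"
  by (simp add: ground_def)

lemma finite_subset_ground: "A \<subseteq> ground d \<Longrightarrow> finite A"
  using finite_subset finite_ground by metis

subsection \<open>Matroid rank\<close>

context
  fixes d :: nat and J :: "nat set \<Rightarrow> bool"
  assumes M: "matroid_indep d J"
begin

lemma indep_empty: "J {}"
  using M by (simp add: matroid_indep_def)

lemma indep_subset_ground: "J A \<Longrightarrow> A \<subseteq> ground d"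
  using M by (simp add: matroid_indep_def)

lemma indep_subset: "J B \<Longrightarrow> A \<subseteq> B \<Longrightarrow> J A"
  using M unfolding matroid_indep_def by blast

lemma indep_augment: "J A \<Longrightarrow> J B \<Longrightarrow> card A < card B \<Longrightarrow> \<exists>x\<in>B - A. J (insert x A)"
  using M unfolding matroid_indep_def by blast

lemma indep_finite: "J A \<Longrightarrow> finite A"
  using indep_subset_ground finite_subset_ground by metis

lemma finite_indep_sets: "finite {A. J A}"
  by (rule finite_subset[of _ "Pow (ground d)"]) (auto dest: indep_subset_ground)

lemma card_le_rank: "J T \<Longrightarrow> T \<subseteq> F \<Longrightarrow> card T \<le> matroid_rank J F"
  unfolding matroid_rank_def
  by (rule Max_ge) (auto intro: finite_subset[OF _ finite_imageI[OF finite_indep_sets, of card]])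

lemma rank_attained:
  obtains T where "T \<subseteq> F" "J T" "matroid_rank J F = card T"
proof -
  have fin: "finite {card A |A. A \<subseteq> F \<and> J A}"
    by (rule finite_subset[OF _ finite_imageI[OF finite_indep_sets, of card]]) auto
  have "{card A |A. A \<subseteq> F \<and> J A} \<noteq> {}"
    using indep_empty by blast
  from Max_in[OF fin this] show ?thesis
    using that unfolding matroid_rank_def by blast
qed

lemma indep_extend_maximal:
  assumes "J C" "C \<subseteq> F"
  obtains D where "C \<subseteq> D" "D \<subseteq> F" "J D" "\<forall>e\<in>F - D. \<not> J (insert e D)"
proof -
  define S where "S = {D. C \<subseteq> D \<and> D \<subseteq> F \<and> J D}"
  have fS: "finite S"
    using finite_indep_sets by (rule finite_subset[rotated]) (auto simp: S_def)
  have "card ` S \<noteq> {}"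
    using assms unfolding S_def by blast
  from Max_in[OF finite_imageI[OF fS] this]
  obtain D where D: "D \<in> S" "card D = Max (card ` S)"
    by (metis imageE)
  have "\<not> J (insert e D)" if e: "e \<in> F - D" for e
  proof
    assume "J (insert e D)"
    then have "insert e D \<in> S"
      using D(1) e unfolding S_def by blast
    then have "card (insert e D) \<le> card D"
      unfolding D(2) using fS by simp
    moreover have "card (insert e D) = Suc (card D)"
      using D(1) e indep_finite unfolding S_def by auto
    ultimately show False
      by simp
  qed
  with D(1) that show ?thesis
    unfolding S_def by blast
qed

lemma rank_of_maximal_indep:
  assumes "B \<subseteq> F" "J B" and maximal: "\<forall>e\<in>F - B. \<not> J (insert e B)"
  shows "matroid_rank J F = card B"
proof -
  obtain T where T: "T \<subseteq> F" "J T" "matroid_rank J F = card T"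
    by (rule rank_attained)
  have "\<not> card B < card T"
    using indep_augment[OF assms(2) T(2)] maximal T(1) by blast
  then show ?thesis
    using card_le_rank[OF assms(2,1)] T(3) by simp
qed

lemma indep_iff_rank_eq_card:
  assumes "finite A"
  shows "J A \<longleftrightarrow> matroid_rank J A = card A"
proof
  assume "J A"
  then show "matroid_rank J A = card A"
    by (rule rank_of_maximal_indep[OF order_refl]) auto
next
  assume r: "matroid_rank J A = card A"
  obtain T where T: "T \<subseteq> A" "J T" "matroid_rank J A = card T"
    by (rule rank_attained)
  then have "T = A"
    using r assms by (metis card_subset_eq)
  then show "J A"
    using T(2) by simp
qed

lemma rank_mono:
  assumes "U \<subseteq> S"
  shows "matroid_rank J U \<le> matroid_rank J S"
proof -
  obtain T where "T \<subseteq> U" "J T" "matroid_rank J U = card T"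
    by (rule rank_attained)
  then show ?thesis
    using card_le_rank[of T S] assms by simp
qed

lemma rank_le_card:
  assumes "finite F"
  shows "matroid_rank J F \<le> card F"
proof -
  obtain T where "T \<subseteq> F" "matroid_rank J F = card T"
    by (rule rank_attained)
  then show ?thesis
    using card_mono[OF assms] by simp
qed

lemma rank_le_rank_plus_card_diff:
  assumes "finite S"
  shows "matroid_rank J S \<le> matroid_rank J U + card (S - U)"
proof -
  obtain D where D: "D \<subseteq> S" "J D" "matroid_rank J S = card D"
    by (rule rank_attained)
  have "card D \<le> card (D \<inter> U) + card (D - U)"
    by (metis Int_Diff_Un card_Un_le)
  moreover have "card (D \<inter> U) \<le> matroid_rank J U"
    using card_le_rank indep_subset[OF D(2)] by blast
  moreover have "card (D - U) \<le> card (S - U)"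
    using D(1) assms by (intro card_mono) auto
  ultimately show ?thesis
    using D(3) by linarith
qed

lemma rank_submodular:
  assumes "finite A" "finite B"
  shows "matroid_rank J (A \<union> B) + matroid_rank J (A \<inter> B) \<le> matroid_rank J A + matroid_rank J B"
proof -
  obtain C where C: "C \<subseteq> A \<inter> B" "J C" "matroid_rank J (A \<inter> B) = card C"
    by (rule rank_attained)
  obtain D where D: "C \<subseteq> D" "D \<subseteq> A \<union> B" "J D" "\<forall>e\<in>(A \<union> B) - D. \<not> J (insert e D)"
    using indep_extend_maximal[OF C(2), of "A \<union> B"] C(1) by blast
  have fD: "finite D"
    using D(3) by (rule indep_finite)
  have "D \<inter> A \<union> D \<inter> B = D" "D \<inter> A \<inter> (D \<inter> B) = D \<inter> (A \<inter> B)"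
    using D(2) by blast+
  then have "card (D \<inter> A) + card (D \<inter> B) = card D + card (D \<inter> (A \<inter> B))"
    using card_Un_Int[of "D \<inter> A" "D \<inter> B"] fD by simp
  moreover have "card C \<le> card (D \<inter> (A \<inter> B))"
    using C(1) D(1) fD by (intro card_mono) auto
  moreover have "card (D \<inter> A) \<le> matroid_rank J A" "card (D \<inter> B) \<le> matroid_rank J B"
    by (rule card_le_rank[OF indep_subset[OF D(3)]]; blast)+
  ultimately show ?thesis
    using rank_of_maximal_indep[OF D(2,3,4)] C(3) by linarith
qed

lemma circuit_nonempty: "circuit d J x \<Longrightarrow> x \<noteq> {}"
  using indep_empty unfolding circuit_def dependent_def by blast

lemma circuit_card_le_rank:
  assumes "circuit d J x"
  shows "int (card x) - 1 \<le> int (matroid_rank J x)"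
proof -
  obtain e where e: "e \<in> x"
    using circuit_nonempty[OF assms] by blast
  have "finite x"
    using assms unfolding circuit_def dependent_def by (blast intro: finite_subset_ground)
  moreover have "J (x - {e})"
    using assms e unfolding circuit_def by blast
  ultimately show ?thesis
    using card_le_rank[of "x - {e}" x] e by (simp add: card_Diff_singleton)
qed

lemma rank_Un_circuit:
  assumes c: "circuit d J x" and "finite U" and "\<not> x \<subseteq> U"
  shows "matroid_rank J (U \<union> x) + 1 \<le> matroid_rank J U + card (x - U)"
proof -
  have fx: "finite x"
    using c unfolding circuit_def dependent_def by (blast intro: finite_subset_ground)
  obtain e where e: "e \<in> x" "e \<notin> U"
    using assms(3) by blast
  define W where "W = (U \<union> x) - {e}"
  have "J (x - {e})"
    using c e(1) unfolding circuit_def by blast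
  moreover have "x - {e} \<subseteq> W"
    unfolding W_def by blast
  ultimately obtain D where D: "x - {e} \<subseteq> D" "D \<subseteq> W" "J D" "\<forall>f\<in>W - D. \<not> J (insert f D)"
    by (rule indep_extend_maximal)
  have "\<not> J (insert e D)"
    using D(1) c indep_subset[of "insert e D" x] unfolding circuit_def dependent_def by blast
  then have "matroid_rank J (U \<union> x) = card D"
    using D by (intro rank_of_maximal_indep) (auto simp: W_def)
  moreover have "matroid_rank J W = card D"
    using D(2-4) by (rule rank_of_maximal_indep)
  moreover have "matroid_rank J W \<le> matroid_rank J U + card (W - U)"
    using assms(2) fx by (intro rank_le_rank_plus_card_diff) (simp add: W_def)
  moreover have "W - U = (x - U) - {e}"
    unfolding W_def by blast
  then have "card (W - U) + 1 = card (x - U)"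
    using e fx card.remove[of "x - U" e] by simp
  ultimately show ?thesis
    by linarith
qed

end

lemma indep_eqI:
  assumes "matroid_indep d I" "matroid_indep d J" "dep_le d I J" "dep_le d J I"
  shows "I = J"
proof
  fix A
  show "I A = J A"
  proof (cases "A \<subseteq> ground d")
    case True
    then show ?thesis
      using assms(3,4) unfolding dep_le_def dependent_def by blast
  next
    case False
    then show ?thesis
      using indep_subset_ground[OF assms(1)] indep_subset_ground[OF assms(2)] by blast
  qed
qed

lemma dep_le_of_rank_le:
  assumes I: "matroid_indep d I" and J: "matroid_indep d J"
    and le: "\<And>F. F \<subseteq> ground d \<Longrightarrow> matroid_rank J F \<le> matroid_rank I F"
  shows "dep_le d I J"
  unfolding dep_le_def dependent_def
proof (intro allI impI conjI)
  fix A
  assume A: "A \<subseteq> ground d \<and> \<not> I A"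
  then have fA: "finite A"
    using finite_subset_ground by blast
  have "matroid_rank I A < card A"
    using A rank_le_card[OF I fA] indep_iff_rank_eq_card[OF I fA] by simp
  then have "matroid_rank J A < card A"
    using le[of A] A by simp
  then show "\<not> J A"
    using indep_iff_rank_eq_card[OF J fA] by simp
qed blast

subsection \<open>Proper sequences bound the rank of every X-matroid\<close>

lemma proper_seq_snoc:
  assumes "proper_seq X (xs @ [x])"
  shows "proper_seq X xs" "x \<in> X" "xs \<noteq> [] \<Longrightarrow> \<not> x \<subseteq> \<Union>(set xs)"
proof -
  from assms have s: "set (xs @ [x]) \<subseteq> X"
    and p: "\<And>i. 1 \<le> i \<Longrightarrow> i < Suc (length xs) \<Longrightarrow> \<not> (xs @ [x]) ! i \<subseteq> \<Union> (set (take i (xs @ [x])))"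
    unfolding proper_seq_def by auto
  show "proper_seq X xs"
    unfolding proper_seq_def
  proof (intro conjI allI impI)
    fix i
    assume "1 \<le> i \<and> i < length xs"
    then show "\<not> xs ! i \<subseteq> \<Union> (set (take i xs))"
      using p[of i] by (simp add: nth_append)
  qed (use s in simp)
  show "x \<in> X"
    using s by simp
  show "\<not> x \<subseteq> \<Union>(set xs)" if "xs \<noteq> []"
    using p[of "length xs"] that by (simp add: Suc_leI)
qed

lemma Union_proper_seq_subset_ground:
  "X_matroid d X J \<Longrightarrow> proper_seq X xs \<Longrightarrow> \<Union>(set xs) \<subseteq> ground d"
  unfolding X_matroid_def proper_seq_def circuit_def dependent_def by blast

lemma rank_Union_proper_seq:
  assumes XJ: "X_matroid d X J" and "proper_seq X xs"
  shows "matroid_rank J (\<Union>(set xs)) + length xs \<le> card (\<Union>(set xs))"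
  using assms(2)
proof (induction xs rule: rev_induct)
  case Nil
  show ?case
    using rank_le_card[of d J "{}"] XJ by (simp add: X_matroid_def)
next
  case (snoc x xs)
  let ?U = "\<Union>(set xs)"
  have M: "matroid_indep d J" and cx: "circuit d J x"
    using XJ proper_seq_snoc(2)[OF snoc.prems] unfolding X_matroid_def by auto
  have fU: "finite ?U" and fx: "finite x"
    using Union_proper_seq_subset_ground[OF XJ proper_seq_snoc(1)[OF snoc.prems]] cx
    unfolding circuit_def dependent_def by (auto intro: finite_subset_ground)
  have "\<not> x \<subseteq> ?U"
    using proper_seq_snoc(3)[OF snoc.prems] circuit_nonempty[OF M cx] by (cases "xs = []") auto
  then have "matroid_rank J (?U \<union> x) + 1 \<le> matroid_rank J ?U + card (x - ?U)"
    by (rule rank_Un_circuit[OF M cx fU])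
  moreover have "card (?U \<union> x) = card ?U + card (x - ?U)"
    using fU fx card_Un_disjoint[of ?U "x - ?U"] by (simp add: Un_Diff_cancel)
  ultimately show ?case
    using snoc.IH[OF proper_seq_snoc(1)[OF snoc.prems]] by (simp add: Un_commute)
qed

lemma rank_le_val_seq:
  assumes XJ: "X_matroid d X J" and F: "F \<subseteq> ground d" and p: "proper_seq X xs"
  shows "int (matroid_rank J F) \<le> val_seq F xs"
proof -
  let ?U = "\<Union>(set xs)"
  have M: "matroid_indep d J"
    using XJ unfolding X_matroid_def by blast
  have fU: "finite ?U" and fF: "finite F"
    using Union_proper_seq_subset_ground[OF XJ p] F by (auto intro: finite_subset_ground)
  have "matroid_rank J F \<le> matroid_rank J (F \<union> ?U)"
    by (rule rank_mono[OF M]) blast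
  also have "\<dots> \<le> matroid_rank J ?U + card (F \<union> ?U - ?U)"
    using fU fF by (intro rank_le_rank_plus_card_diff[OF M]) blast
  finally have "matroid_rank J F + length xs \<le> card ?U + card (F \<union> ?U - ?U)"
    using rank_Union_proper_seq[OF XJ p] by linarith
  also have "\<dots> = card (?U \<union> (F \<union> ?U - ?U))"
    using fU fF by (intro card_Un_disjoint[symmetric]) auto
  also have "?U \<union> (F \<union> ?U - ?U) = F \<union> ?U"
    by blast
  finally show ?thesis
    unfolding val_seq_def by linarith
qed

lemma finite_proper_seqs:
  assumes XJ: "X_matroid d X J"
  shows "finite {xs. proper_seq X xs}"
proof -
  have "length xs \<le> d" if p: "proper_seq X xs" for xs
    using rank_Union_proper_seq[OF XJ p] card_mono[OF finite_ground Union_proper_seq_subset_ground[OF XJ p]]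
    by (simp add: ground_def)
  then have "{xs. proper_seq X xs} \<subseteq> {xs. set xs \<subseteq> X \<and> length xs \<le> d}"
    unfolding proper_seq_def by blast
  moreover have "X \<subseteq> Pow (ground d)"
    using XJ unfolding X_matroid_def circuit_def dependent_def by blast
  then have "finite X"
    by (rule finite_subset) simp
  ultimately show ?thesis
    by (rule finite_subset[OF _ finite_lists_length_le])
qed

context
  fixes d X J
  assumes XJ: "X_matroid d X J"
begin

lemma valX_le_val_seq: "proper_seq X xs \<Longrightarrow> valX X F \<le> val_seq F xs"
  unfolding valX_def using finite_proper_seqs[OF XJ] by (intro Min_le) auto

lemma rank_le_valX:
  assumes "F \<subseteq> ground d"
  shows "int (matroid_rank J F) \<le> valX X F"
proof -
  have "finite {val_seq F xs | xs. proper_seq X xs}"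
    using finite_imageI[OF finite_proper_seqs[OF XJ], of "val_seq F"] by (simp add: setcompr_eq_image)
  moreover have "proper_seq X []"
    unfolding proper_seq_def by simp
  ultimately obtain xs where "proper_seq X xs" "valX X F = val_seq F xs"
    using Min_in[of "{val_seq F xs | xs. proper_seq X xs}"] unfolding valX_def by blast
  then show ?thesis
    using rank_le_val_seq[OF XJ assms] by simp
qed

end

subsection \<open>Matroids from rank functions\<close>

definition indep_of_rank :: "nat \<Rightarrow> (nat set \<Rightarrow> int) \<Rightarrow> nat set \<Rightarrow> bool" where
  "indep_of_rank d f A \<longleftrightarrow> A \<subseteq> ground d \<and> f A = int (card A)"

lemma submodular_Un_le:
  assumes sm: "submodular_on d f" and A: "A \<subseteq> ground d" and "finite S" "S \<subseteq> ground d"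
    and "\<forall>e\<in>S. f (insert e A) \<le> f A"
  shows "f (A \<union> S) \<le> f A"
  using assms(3-)
proof (induction S rule: finite_induct)
  case empty
  then show ?case
    by simp
next
  case (insert e S)
  have "A \<union> S \<subseteq> ground d" "insert e A \<subseteq> ground d"
    using A insert.prems(1) by auto
  then have "f ((A \<union> S) \<union> insert e A) + f ((A \<union> S) \<inter> insert e A) \<le> f (A \<union> S) + f (insert e A)"
    using sm unfolding submodular_on_def by blast
  moreover have "(A \<union> S) \<union> insert e A = A \<union> insert e S" "(A \<union> S) \<inter> insert e A = A"
    using insert.hyps(2) by blast+
  moreover have "f (A \<union> S) \<le> f A" "f (insert e A) \<le> f A"
    using insert.IH insert.prems by auto
  ultimately show ?case
    by simp
qed

locale rank_function =
  fixes d :: nat and f :: "nat set \<Rightarrow> int"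
  assumes submod: "submodular_on d f"
    and mono: "\<And>A B. A \<subseteq> B \<Longrightarrow> B \<subseteq> ground d \<Longrightarrow> f A \<le> f B"
    and unit_increase: "\<And>A B. B \<subseteq> A \<Longrightarrow> A \<subseteq> ground d \<Longrightarrow> f A \<le> f B + int (card (A - B))"
    and empty: "f {} = 0"
begin

lemma le_card: "A \<subseteq> ground d \<Longrightarrow> f A \<le> int (card A)"
  using unit_increase[of "{}" A] empty by simp

lemma insert_le_if_not_indep:
  assumes "indep_of_rank d f A" "e \<in> ground d" "e \<notin> A" "\<not> indep_of_rank d f (insert e A)"
  shows "f (insert e A) \<le> f A"
proof -
  have A: "A \<subseteq> ground d" "f A = int (card A)" "finite A"
    using assms(1) unfolding indep_of_rank_def by (auto intro: finite_subset_ground)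
  have "insert e A - A = {e}"
    using assms(3) by blast
  then have "f (insert e A) \<le> f A + 1"
    using unit_increase[of A "insert e A"] A(1) assms(2) by auto
  moreover have "f (insert e A) \<noteq> f A + 1"
    using assms A unfolding indep_of_rank_def by auto
  ultimately show ?thesis
    by linarith
qed

lemma Un_le_if_maximal:
  assumes "indep_of_rank d f T" "S \<subseteq> ground d" "\<forall>e\<in>S - T. \<not> indep_of_rank d f (insert e T)"
  shows "f (T \<union> S) \<le> f T"
proof -
  have "T \<subseteq> ground d"
    using assms(1) unfolding indep_of_rank_def by blast
  then have "f (T \<union> (S - T)) \<le> f T"
    using assms insert_le_if_not_indep
    by (intro submodular_Un_le[OF submod]) (auto intro: finite_subset_ground)
  then show ?thesis
    by (simp add: Un_Diff_cancel)
qed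

lemma matroid_indep_of_rank: "matroid_indep d (indep_of_rank d f)"
  unfolding matroid_indep_def
proof (intro conjI allI impI)
  show "indep_of_rank d f {}"
    using empty by (simp add: indep_of_rank_def)
next
  fix A
  show "indep_of_rank d f A \<Longrightarrow> A \<subseteq> ground d"
    by (simp add: indep_of_rank_def)
next
  fix A B
  assume AB: "indep_of_rank d f B \<and> A \<subseteq> B"
  then have B: "B \<subseteq> ground d" "f B = int (card B)" "finite B"
    unfolding indep_of_rank_def by (auto intro: finite_subset_ground)
  then have "card B = card A + card (B - A)"
    using AB by (metis card_Diff_subset card_mono finite_subset le_add_diff_inverse)
  then show "indep_of_rank d f A"
    using unit_increase[of A B] le_card[of A] AB B unfolding indep_of_rank_def by auto
next
  fix A B
  assume AB: "indep_of_rank d f A \<and> indep_of_rank d f B \<and> card A < card B"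
  show "\<exists>x\<in>B - A. indep_of_rank d f (insert x A)"
  proof (rule ccontr)
    assume "\<not> ?thesis"
    then have "f (A \<union> B) \<le> f A"
      using AB Un_le_if_maximal[of A B] unfolding indep_of_rank_def by blast
    moreover have "f B \<le> f (A \<union> B)"
      using AB mono[of B "A \<union> B"] unfolding indep_of_rank_def by blast
    ultimately show False
      using AB unfolding indep_of_rank_def by simp
  qed
qed

lemma matroid_rank_indep_of_rank:
  assumes F: "F \<subseteq> ground d"
  shows "int (matroid_rank (indep_of_rank d f) F) = f F"
proof -
  let ?I = "indep_of_rank d f"
  obtain T where T: "T \<subseteq> F" "?I T" "matroid_rank ?I F = card T"
    by (rule rank_attained[OF matroid_indep_of_rank])
  have "\<forall>e\<in>F - T. \<not> ?I (insert e T)"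
    using T card_le_rank[OF matroid_indep_of_rank, of _ F] indep_finite[OF matroid_indep_of_rank]
    by (metis DiffE Suc_n_not_le_n card_insert_disjoint insert_subset)
  then have "f F \<le> f T"
    using Un_le_if_maximal[OF T(2) F] T(1) by (simp add: Un_absorb1)
  moreover have "f T \<le> f F"
    using mono T(1) F by blast
  ultimately show ?thesis
    using T unfolding indep_of_rank_def by simp
qed

end

subsection \<open>The refinement procedure\<close>

lemma refine_step_cases:
  assumes "refine_step d X f g"
  obtains (rule_i) A B x where "rule_i_cond d X f A B x"
      "g = f(A \<union> B := f A + f B - min (int (card (A \<inter> B))) (int (card x) - 1))"
  | (rule_ii) A B where "rule_ii_cond d f A B" "g = f(A := f B)"
  | (rule_iii) A B where "rule_iii_cond d f A B" "g = f(A := f B + int (card (A - B)))"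
  | (idle) "g = f"
  using assms unfolding refine_step_def by (auto split: if_splits)

lemma refine_step_le: "refine_step d X f g \<Longrightarrow> g F \<le> f F"
  by (erule refine_step_cases) (auto simp: rule_i_cond_def rule_ii_cond_def rule_iii_cond_def)

lemma refine_step_fixpoint:
  assumes fixpoint: "refine_step d X f f"
  shows "\<not> rule_ii_cond d f A B" "\<not> rule_iii_cond d f A B"
proof -
  have no_i: "\<not> (\<exists>A B x. rule_i_cond d X f A B x)"
  proof
    assume "\<exists>A B x. rule_i_cond d X f A B x"
    then obtain A B x where "rule_i_cond d X f A B x"
      "f = f(A \<union> B := f A + f B - min (int (card (A \<inter> B))) (int (card x) - 1))"
      using fixpoint unfolding refine_step_def by auto
    then show False
      unfolding rule_i_cond_def by (metis fun_upd_same less_irrefl)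
  qed
  have no_ii: "\<not> (\<exists>A B. rule_ii_cond d f A B)"
  proof
    assume "\<exists>A B. rule_ii_cond d f A B"
    then obtain A B where "rule_ii_cond d f A B" "f = f(A := f B)"
      using fixpoint no_i unfolding refine_step_def by auto
    then show False
      unfolding rule_ii_cond_def by (metis fun_upd_same less_irrefl)
  qed
  have "\<not> (\<exists>A B. rule_iii_cond d f A B)"
  proof
    assume "\<exists>A B. rule_iii_cond d f A B"
    then obtain A B where "rule_iii_cond d f A B" "f = f(A := f B + int (card (A - B)))"
      using fixpoint no_i no_ii unfolding refine_step_def by auto
    then show False
      unfolding rule_iii_cond_def by (metis fun_upd_same less_irrefl)
  qed
  with no_ii show "\<not> rule_ii_cond d f A B" "\<not> rule_iii_cond d f A B"
    by blast+
qed

lemma refine_fixpoint_mono: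
  assumes "refine_step d X f f" "A \<subseteq> B" "B \<subseteq> ground d"
  shows "f A \<le> f B"
  using refine_step_fixpoint(1)[OF assms(1), of A B] assms(2,3)
  by (cases "A = B") (auto simp: rule_ii_cond_def)

lemma refine_fixpoint_le_plus_card_diff:
  assumes "refine_step d X f f" "B \<subseteq> A" "A \<subseteq> ground d"
  shows "f A \<le> f B + int (card (A - B))"
  using refine_step_fixpoint(2)[OF assms(1), of A B] assms(2,3)
  by (cases "A = B") (auto simp: rule_iii_cond_def)

lemma rank_Un_le_rule_i:
  assumes XJ: "X_matroid d X J" and "A \<subseteq> ground d" "B \<subseteq> ground d" "x \<in> X" "A \<inter> B \<subseteq> x"
  shows "int (matroid_rank J (A \<union> B))
    \<le> int (matroid_rank J A) + int (matroid_rank J B) - min (int (card (A \<inter> B))) (int (card x) - 1)"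
proof -
  have M: "matroid_indep d J" and cx: "circuit d J x"
    using XJ assms(4) unfolding X_matroid_def by auto
  have "min (int (card (A \<inter> B))) (int (card x) - 1) \<le> int (matroid_rank J (A \<inter> B))"
  proof (cases "A \<inter> B = x")
    case True
    then show ?thesis
      using circuit_card_le_rank[OF M cx] by simp
  next
    case False
    then have "J (A \<inter> B)"
      using cx assms(5) unfolding circuit_def by blast
    then have "card (A \<inter> B) \<le> matroid_rank J (A \<inter> B)"
      by (rule card_le_rank[OF M]) simp
    then show ?thesis
      by simp
  qed
  moreover have "matroid_rank J (A \<union> B) + matroid_rank J (A \<inter> B) \<le> matroid_rank J A + matroid_rank J B"
    using assms(2,3) by (intro rank_submodular[OF M]) (auto intro: finite_subset_ground)
  ultimately show ?thesis
    by linarith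
qed

lemma refine_step_preserves_rank_le:
  assumes XJ: "X_matroid d X J" and step: "refine_step d X f g"
    and le: "\<And>F. F \<subseteq> ground d \<Longrightarrow> int (matroid_rank J F) \<le> f F"
    and F: "F \<subseteq> ground d"
  shows "int (matroid_rank J F) \<le> g F"
proof -
  have M: "matroid_indep d J"
    using XJ unfolding X_matroid_def by blast
  from step show ?thesis
  proof (cases rule: refine_step_cases)
    case (rule_i A B x)
    then have "int (matroid_rank J (A \<union> B)) \<le> f A + f B - min (int (card (A \<inter> B))) (int (card x) - 1)"
      using rank_Un_le_rule_i[OF XJ, of A B x] le[of A] le[of B] unfolding rule_i_cond_def by linarith
    then show ?thesis
      using rule_i(2) le[OF F] by simp
  next
    case (rule_ii A B)
    then have "int (matroid_rank J A) \<le> f B"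
      using rank_mono[OF M, of A B] le[of B] unfolding rule_ii_cond_def by fastforce
    then show ?thesis
      using rule_ii(2) le[OF F] by simp
  next
    case (rule_iii A B)
    then have "int (matroid_rank J A) \<le> f B + int (card (A - B))"
      using rank_le_rank_plus_card_diff[OF M, of A B] le[of B]
      unfolding rule_iii_cond_def by (fastforce intro: finite_subset_ground)
    then show ?thesis
      using rule_iii(2) le[OF F] by simp
  qed (use le[OF F] in simp)
qed

context
  fixes d X vs
  assumes run: "refinement_run d X vs"
begin

lemma refinement_run_le_valX: "1 \<le> n \<Longrightarrow> vs n F \<le> valX X F"
proof (induction n rule: dec_induct)
  case base
  show ?case
    using run by (simp add: refinement_run_def)
next
  case (step m)
  then show ?case
    using run refine_step_le[of d X "vs m" "vs (Suc m)" F] by (simp add: refinement_run_def)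
qed

lemma refinement_run_rank_le:
  assumes XJ: "X_matroid d X J" and "1 \<le> n" and F: "F \<subseteq> ground d"
  shows "int (matroid_rank J F) \<le> vs n F"
  using assms(2) F
proof (induction n arbitrary: F rule: dec_induct)
  case base
  then show ?case
    using run rank_le_valX[OF XJ] by (simp add: refinement_run_def)
next
  case (step m)
  have "refine_step d X (vs m) (vs (Suc m))"
    using run step.hyps(1) by (simp add: refinement_run_def)
  then show ?case
    by (rule refine_step_preserves_rank_le[OF XJ _ step.IH step.prems])
qed

context
  fixes v
  assumes stat: "\<exists>N\<ge>1. \<forall>n\<ge>N. vs n = v"
begin

lemma stationary_fixpoint: "refine_step d X v v"
proof -
  obtain N where N: "N \<ge> 1" "\<And>n. n \<ge> N \<Longrightarrow> vs n = v"
    using stat by blast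
  have "refine_step d X (vs N) (vs (Suc N))"
    using run N(1) unfolding refinement_run_def by blast
  then show ?thesis
    using N(2)[of N] N(2)[of "Suc N"] by simp
qed

lemma stationary_le_valX: "v F \<le> valX X F"
  using stat refinement_run_le_valX by force

lemma stationary_rank_le: "X_matroid d X J \<Longrightarrow> F \<subseteq> ground d \<Longrightarrow> int (matroid_rank J F) \<le> v F"
  using stat refinement_run_rank_le by force

lemma stationary_rank_function:
  assumes XJ: "X_matroid d X J" and "submodular_on d v"
  shows "rank_function d v"
proof
  have "v {} \<le> 0"
    using stationary_le_valX[of "{}"] valX_le_val_seq[OF XJ, of "[]" "{}"]
    by (simp add: proper_seq_def val_seq_def)
  moreover have "0 \<le> v {}"
    using stationary_rank_le[OF XJ, of "{}"] by simp
  ultimately show "v {} = 0"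
    by simp
qed (use assms(2) refine_fixpoint_mono[OF stationary_fixpoint]
      refine_fixpoint_le_plus_card_diff[OF stationary_fixpoint] in auto)

end

end

lemma circuit_of_dep_le:
  assumes "dep_le d I J" "circuit d J x" "\<not> I x"
  shows "circuit d I x"
  using assms unfolding dep_le_def circuit_def dependent_def by (meson order.trans psubset_imp_subset)

lemma least_X_matroid:
  assumes XI: "X_matroid d X I" and least: "\<And>J. X_matroid d X J \<Longrightarrow> dep_le d I J"
  shows "minimal_X_matroid d X I" "\<forall>J. minimal_X_matroid d X J \<longrightarrow> J = I"
  using assms indep_eqI unfolding minimal_X_matroid_def X_matroid_def by metis+

theorem mainTheorem17:
  fixes d :: nat and X :: "nat set set" and vs :: "nat \<Rightarrow> nat set \<Rightarrow> int" and v :: "nat set \<Rightarrow> int"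
  assumes X_sub: "\<forall>x\<in>X. x \<subseteq> ground d"
    and exists_Xm: "\<exists>I. X_matroid d X I"
    and run: "refinement_run d X vs"
    and stat: "\<exists>N\<ge>1. \<forall>n\<ge>N. vs n = v"
    and subm: "submodular_on d v"
  shows "\<exists>I. X_matroid d X I \<and> (\<forall>F. F \<subseteq> ground d \<longrightarrow> v F = int (matroid_rank I F))
             \<and> minimal_X_matroid d X I
             \<and> (\<forall>J. minimal_X_matroid d X J \<longrightarrow> J = I)"
proof -
  obtain J0 where J0: "X_matroid d X J0"
    using exists_Xm by blast
  interpret rank_function d v
    using stationary_rank_function[OF run stat J0 subm] .
  define I where "I = indep_of_rank d v"
  have rank_I: "F \<subseteq> ground d \<Longrightarrow> v F = int (matroid_rank I F)" for F
    using matroid_rank_indep_of_rank unfolding I_def by simp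
  have least: "dep_le d I J" if "X_matroid d X J" for J
    using that stationary_rank_le[OF run stat] rank_I matroid_indep_of_rank
    unfolding I_def X_matroid_def by (intro dep_le_of_rank_le) (auto simp: I_def)
  have "\<not> I x" if "x \<in> X" for x
    using stationary_le_valX[OF run stat, of x] valX_le_val_seq[OF J0, of "[x]" x] that
    by (simp add: I_def indep_of_rank_def proper_seq_def val_seq_def)
  then have "X_matroid d X I"
    using J0 least[OF J0] circuit_of_dep_le matroid_indep_of_rank
    unfolding X_matroid_def I_def by blast
  then show ?thesis
    using least_X_matroid[of d X I] least rank_I by blast
qed

end
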